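(* Let $f:2^{\mathcal{E}_x}\to\mathbb{R}_{\ge 0}$ be normalized, monotone and submodular, let $\Delta\ge1$ be the maximum vertex degree of $\mathcal{G}$, and consider $(\mathrm{P}_1)$ under the constraint TU$_b$ (i.e., maximize $f(\mathcal{E})$ over $\mathcal{E}\subseteq\mathcal{E}_x$ with $|\mathcal{E}|\le k$ and some vertex cover $\mathcal{V}$ of $\mathcal{E}$ with $|\mathcal{V}|\le b$), with optimal value $\mathrm{OPT}_1$. Then the algorithm Vertex-Greedy (described in the context) returns a feasible solution $\mathcal{E}_{\mathrm{grd}}$ of this problem with $f(\mathcal{E}_{\mathrm{grd}})\ge\alpha_v(b,k,\Delta)\cdot\mathrm{OPT}_1$, where $\alpha_v(b,k,\Delta)=1-\exp\big(-\min\{1,\lfloor k/\Delta\rfloor/b\}\big)$.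
   Context: $\mathcal{G}=(\mathcal{V}_x,\mathcal{E}_x)$ is a finite simple undirected graph; $b,k\ge1$ are integers. For $\mathcal{V}\subseteq\mathcal{V}_x$, $\mathsf{edges}(\mathcal{V})$ is the set of edges incident to at least one vertex of $\mathcal{V}$. A set function $h$ is normalized if $h(\varnothing)=0$, monotone if $h(A)\le h(B)$ for $A\subseteq B$, submodular if $h(A)+h(B)\ge h(A\cup B)+h(A\cap B)$. Vertex-Greedy: let $h(\mathcal{V})=f(\mathsf{edges}(\mathcal{V}))$. Start with $\mathcal{V}_{\mathrm{grd}}=\varnothing$ and repeat: pick $v^\star\in\arg\max_{v\in\mathcal{V}_x\setminus\mathcal{V}_{\mathrm{grd}}}h(\mathcal{V}_{\mathrm{grd}}\cup\{v\})$; if $|\mathcal{V}_{\mathrm{grd}}\cup\{v^\star\}|>b$ or $|\mathsf{edges}(\mathcal{V}_{\mathrm{grd}}\cup\{v^\star\})|>k$ (or no vertex remains), stop; otherwise set $\mathcal{V}_{\mathrm{grd}}\leftarrow\mathcal{V}_{\mathrm{grd}}\cup\{v^\star\}$. Return $\mathcal{V}_{\mathrm{grd}}$ and $\mathcal{E}_{\mathrm{grd}}=\mathsf{edges}(\mathcal{V}_{\mathrm{grd}})$. *)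

theory Defs
  imports Complex_Main
begin

definition simple_graph :: "'a set \<Rightarrow> 'a set set \<Rightarrow> bool" where
  "simple_graph V E \<longleftrightarrow> finite V \<and>
     (\<forall>e\<in>E. \<exists>u v. u \<in> V \<and> v \<in> V \<and> u \<noteq> v \<and> e = {u, v})"

definition edges_of :: "'a set set \<Rightarrow> 'a set \<Rightarrow> 'a set set" where
  "edges_of E S = {e \<in> E. e \<inter> S \<noteq> {}}"

definition degree :: "'a set set \<Rightarrow> 'a \<Rightarrow> nat" where
  "degree E v = card {e \<in> E. v \<in> e}"

definition max_degree :: "'a set \<Rightarrow> 'a set set \<Rightarrow> nat" where
  "max_degree V E = Max (degree E ` V)"

definition normalized :: "('b set \<Rightarrow> real) \<Rightarrow> bool" where
  "normalized f \<longleftrightarrow> f {} = 0"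

definition monotone_set_fun :: "'b set \<Rightarrow> ('b set \<Rightarrow> real) \<Rightarrow> bool" where
  "monotone_set_fun X f \<longleftrightarrow> (\<forall>A B. A \<subseteq> B \<longrightarrow> B \<subseteq> X \<longrightarrow> f A \<le> f B)"

definition submodular_set_fun :: "'b set \<Rightarrow> ('b set \<Rightarrow> real) \<Rightarrow> bool" where
  "submodular_set_fun X f \<longleftrightarrow>
     (\<forall>A B. A \<subseteq> X \<longrightarrow> B \<subseteq> X \<longrightarrow> f A + f B \<ge> f (A \<union> B) + f (A \<inter> B))"

definition nonneg_set_fun :: "'b set \<Rightarrow> ('b set \<Rightarrow> real) \<Rightarrow> bool" where
  "nonneg_set_fun X f \<longleftrightarrow> (\<forall>A. A \<subseteq> X \<longrightarrow> f A \<ge> 0)"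

definition is_vertex_cover :: "'a set \<Rightarrow> 'a set set \<Rightarrow> 'a set \<Rightarrow> bool" where
  "is_vertex_cover V Ed Vc \<longleftrightarrow> Vc \<subseteq> V \<and> (\<forall>e\<in>Ed. e \<inter> Vc \<noteq> {})"

definition feasible_TU :: "'a set \<Rightarrow> 'a set set \<Rightarrow> nat \<Rightarrow> nat \<Rightarrow> 'a set set \<Rightarrow> bool" where
  "feasible_TU V E b k Ed \<longleftrightarrow> Ed \<subseteq> E \<and> card Ed \<le> k \<and>
     (\<exists>Vc. is_vertex_cover V Ed Vc \<and> card Vc \<le> b)"

definition OPT1 :: "'a set \<Rightarrow> 'a set set \<Rightarrow> ('a set set \<Rightarrow> real) \<Rightarrow> nat \<Rightarrow> nat \<Rightarrow> real" where
  "OPT1 V E f b k = Max (f ` {Ed. feasible_TU V E b k Ed})"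

text \<open>Vertex-Greedy. h(S) = f(edges(S)); argmax choices are arbitrary (any tie-breaking).\<close>
definition vg_h :: "'a set set \<Rightarrow> ('a set set \<Rightarrow> real) \<Rightarrow> 'a set \<Rightarrow> real" where
  "vg_h E f S = f (edges_of E S)"

definition vg_argmax :: "'a set \<Rightarrow> 'a set set \<Rightarrow> ('a set set \<Rightarrow> real) \<Rightarrow> 'a set \<Rightarrow> 'a \<Rightarrow> bool" where
  "vg_argmax V E f S v \<longleftrightarrow> v \<in> V - S \<and>
     (\<forall>w\<in>V - S. vg_h E f (insert w S) \<le> vg_h E f (insert v S))"

text \<open>vs is the sequence of vertices accepted by some execution of Vertex-Greedy:
  each accepted vertex is a maximizer and keeps both budgets; the run stops either when
  no vertex remains or when the chosen maximizer would violate a budget.\<close>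
definition vertex_greedy_run ::
  "'a set \<Rightarrow> 'a set set \<Rightarrow> ('a set set \<Rightarrow> real) \<Rightarrow> nat \<Rightarrow> nat \<Rightarrow> 'a list \<Rightarrow> bool" where
  "vertex_greedy_run V E f b k vs \<longleftrightarrow>
     distinct vs \<and>
     (\<forall>i < length vs. vg_argmax V E f (set (take i vs)) (vs ! i) \<and>
        card (set (take (Suc i) vs)) \<le> b \<and>
        card (edges_of E (set (take (Suc i) vs))) \<le> k) \<and>
     (V - set vs = {} \<or>
      (\<exists>v. vg_argmax V E f (set vs) v \<and>
         (card (insert v (set vs)) > b \<or> card (edges_of E (insert v (set vs))) > k)))"

end

theory Submission
  imports Defs
begin

text \<open>The vertex objective h(S) = f(edges(S)) is again monotone and submodular, so the
  classical greedy analysis applies to it: an optimal edge set is covered by at most b vertices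
  C, hence OPT_1 \<le> h(C), and each greedy vertex closes at least a 1/b fraction of the gap
  h(C) - h(S). The greedy run can only be stopped by a budget before it has picked
  L = min b \<lfloor>k/\<Delta>\<rfloor> vertices, since L vertices have at most L\<cdot>\<Delta> incident edges; after L steps
  the gap has shrunk by (1 - 1/b)^L \<le> exp(-L/b).\<close>

lemma monotone_set_funD: "monotone_set_fun X h \<Longrightarrow> A \<subseteq> B \<Longrightarrow> B \<subseteq> X \<Longrightarrow> h A \<le> h B"
  unfolding monotone_set_fun_def by blast

lemma submodular_set_funD:
  "submodular_set_fun X h \<Longrightarrow> A \<subseteq> X \<Longrightarrow> B \<subseteq> X \<Longrightarrow> h (A \<union> B) + h (A \<inter> B) \<le> h A + h B"
  unfolding submodular_set_fun_def by blast

lemma submodular_le_sum_marginals: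
  assumes "submodular_set_fun X h" "finite T" "S \<subseteq> X" "T \<subseteq> X"
  shows "h (S \<union> T) \<le> h S + (\<Sum>t\<in>T. h (insert t S) - h S)"
  using assms(2,4)
proof (induction T rule: finite_induct)
  case empty
  then show ?case by simp
next
  case (insert t T)
  have "insert t S \<subseteq> X" "S \<union> T \<subseteq> X" using assms(3) insert.prems by auto
  then have "h (insert t S \<union> (S \<union> T)) + h (insert t S \<inter> (S \<union> T)) \<le> h (insert t S) + h (S \<union> T)"
    by (rule submodular_set_funD[OF assms(1)])
  moreover have "insert t S \<union> (S \<union> T) = S \<union> insert t T" by blast
  moreover have "insert t S \<inter> (S \<union> T) = S" using insert.hyps(2) by blast
  ultimately show ?case using insert by simp
qed

lemma submodular_greedy_step:
  assumes mono: "monotone_set_fun X h" and submod: "submodular_set_fun X h"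
    and "finite C" "C \<subseteq> X" "card C \<le> b" "b \<ge> 1" "S \<subseteq> X" "v \<in> X"
    and best: "\<And>w. w \<in> C - S \<Longrightarrow> h (insert w S) \<le> h (insert v S)"
  shows "h C - h (insert v S) \<le> (1 - 1 / real b) * (h C - h S)"
proof -
  have gain_nonneg: "0 \<le> h (insert v S) - h S"
    using monotone_set_funD[OF mono, of S "insert v S"] assms(7,8) by auto
  have "h C \<le> h (S \<union> (C - S))"
    using monotone_set_funD[OF mono, of C "S \<union> (C - S)"] assms(4,7) by auto
  also have "\<dots> \<le> h S + (\<Sum>w\<in>C - S. h (insert w S) - h S)"
    using submodular_le_sum_marginals[OF submod] assms(3,4,7) by blast
  also have "\<dots> \<le> h S + (\<Sum>w\<in>C - S. h (insert v S) - h S)"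
    using best by (intro add_left_mono sum_mono) simp
  also have "\<dots> \<le> h S + real b * (h (insert v S) - h S)"
  proof -
    have "card (C - S) \<le> b" using card_mono[OF assms(3), of "C - S"] assms(5) by auto
    then show ?thesis using gain_nonneg by (simp add: mult_right_mono)
  qed
  finally have "h C - h S \<le> real b * (h (insert v S) - h S)" by simp
  then show ?thesis using assms(6) by (simp add: field_simps)
qed

lemma gap_contraction_iterate:
  fixes g :: "nat \<Rightarrow> real"
  assumes "0 \<le> q" "\<And>i. i < n \<Longrightarrow> c - g (Suc i) \<le> q * (c - g i)"
  shows "c - g n \<le> q ^ n * (c - g 0)"
  using assms(2)
proof (induction n)
  case (Suc n)
  have "c - g (Suc n) \<le> q * (c - g n)" using Suc.prems by simp
  also have "\<dots> \<le> q * (q ^ n * (c - g 0))" using Suc assms(1) by (simp add: mult_left_mono)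
  finally show ?case by (simp add: mult.assoc)
qed simp

lemma one_minus_inverse_power_le_exp:
  assumes "b \<ge> 1"
  shows "(1 - 1 / real b) ^ L \<le> exp (- (real L / real b))"
proof -
  have "(1 - 1 / real b) ^ L \<le> exp (- (1 / real b)) ^ L"
    using assms exp_ge_add_one_self[of "- (1 / real b)"] by (intro power_mono) auto
  also have "\<dots> = exp (real L * - (1 / real b))" by (rule exp_of_nat_mult[symmetric])
  also have "\<dots> = exp (- (real L / real b))" by simp
  finally show ?thesis .
qed

lemma edges_of_subset: "edges_of E S \<subseteq> E"
  unfolding edges_of_def by blast

lemma edges_of_mono: "A \<subseteq> B \<Longrightarrow> edges_of E A \<subseteq> edges_of E B"
  unfolding edges_of_def by blast

lemma monotone_set_fun_vg_h:
  assumes "monotone_set_fun E f"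
  shows "monotone_set_fun X (vg_h E f)"
  unfolding monotone_set_fun_def vg_h_def
  by (blast intro: monotone_set_funD[OF assms edges_of_mono edges_of_subset])

lemma submodular_set_fun_vg_h:
  assumes mono: "monotone_set_fun E f" and submod: "submodular_set_fun E f"
  shows "submodular_set_fun X (vg_h E f)"
  unfolding submodular_set_fun_def
proof (intro allI impI)
  fix A B
  let ?EA = "edges_of E A" and ?EB = "edges_of E B"
  have "edges_of E (A \<union> B) = ?EA \<union> ?EB" unfolding edges_of_def by blast
  moreover have "f (edges_of E (A \<inter> B)) \<le> f (?EA \<inter> ?EB)"
    using edges_of_subset[of E A] by (intro monotone_set_funD[OF mono]) (auto simp: edges_of_def)
  moreover have "f (?EA \<union> ?EB) + f (?EA \<inter> ?EB) \<le> f ?EA + f ?EB"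
    using submodular_set_funD[OF submod edges_of_subset edges_of_subset] .
  ultimately show "vg_h E f (A \<union> B) + vg_h E f (A \<inter> B) \<le> vg_h E f A + vg_h E f B"
    unfolding vg_h_def by simp
qed

lemma vg_h_nonneg:
  assumes "normalized f" "monotone_set_fun E f"
  shows "0 \<le> vg_h E f S"
  using monotone_set_funD[OF assms(2) empty_subsetI edges_of_subset] assms(1)
  unfolding normalized_def vg_h_def by simp

lemma card_edges_of_le:
  assumes "finite V" "S \<subseteq> V"
  shows "card (edges_of E S) \<le> card S * max_degree V E"
proof -
  have finS: "finite S" using assms finite_subset by blast
  have "edges_of E S = (\<Union>v\<in>S. {e\<in>E. v \<in> e})" unfolding edges_of_def by blast
  then have "card (edges_of E S) \<le> (\<Sum>v\<in>S. degree E v)"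
    using card_UN_le[OF finS] by (simp add: degree_def)
  also have "\<dots> \<le> (\<Sum>v\<in>S. max_degree V E)"
    using assms by (intro sum_mono) (auto simp: max_degree_def)
  finally show ?thesis by simp
qed

lemma simple_graph_finite_edges:
  assumes "simple_graph V E"
  shows "finite E"
proof -
  have "E \<subseteq> Pow V"
  proof
    fix e assume "e \<in> E"
    then obtain u w where "u \<in> V" "w \<in> V" "e = {u, w}"
      using assms unfolding simple_graph_def by blast
    then show "e \<in> Pow V" by simp
  qed
  moreover have "finite V" using assms by (simp add: simple_graph_def)
  ultimately show ?thesis by (simp add: finite_subset[of E "Pow V"])
qed

lemma OPT1_le_vg_h_cover:
  assumes "finite E" "monotone_set_fun E f"
  obtains C where "C \<subseteq> V" "card C \<le> b" "OPT1 V E f b k \<le> vg_h E f C"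
proof -
  let ?F = "{Ed. feasible_TU V E b k Ed}"
  have "?F \<subseteq> Pow E" by (auto simp: feasible_TU_def)
  then have "finite ?F" by (rule finite_subset) (simp add: assms(1))
  moreover have "{} \<in> ?F" unfolding feasible_TU_def is_vertex_cover_def by (simp add: exI[of _ "{}"])
  ultimately have "OPT1 V E f b k \<in> f ` ?F" unfolding OPT1_def by (intro Max_in) auto
  then obtain Ed where Ed: "feasible_TU V E b k Ed" "f Ed = OPT1 V E f b k" by auto
  then obtain C where C: "C \<subseteq> V" "card C \<le> b" "\<forall>e\<in>Ed. e \<inter> C \<noteq> {}"
    unfolding feasible_TU_def is_vertex_cover_def by blast
  have "Ed \<subseteq> edges_of E C" using Ed(1) C(3) unfolding feasible_TU_def edges_of_def by blast
  then have "f Ed \<le> f (edges_of E C)" by (rule monotone_set_funD[OF assms(2) _ edges_of_subset])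
  then have "OPT1 V E f b k \<le> vg_h E f C" using Ed(2) by (simp add: vg_h_def)
  with C show thesis using that by blast
qed

lemma vertex_greedy_run_step:
  assumes "vertex_greedy_run V E f b k vs" "i < length vs"
  shows "vg_argmax V E f (set (take i vs)) (vs ! i)"
    and "card (set (take (Suc i) vs)) \<le> b" "card (edges_of E (set (take (Suc i) vs))) \<le> k"
  using assms(1)[unfolded vertex_greedy_run_def, THEN conjunct2, THEN conjunct1] assms(2)
  by blast+

lemma vertex_greedy_run_subset:
  assumes "vertex_greedy_run V E f b k vs"
  shows "set vs \<subseteq> V"
  using vertex_greedy_run_step(1)[OF assms] by (auto simp: in_set_conv_nth vg_argmax_def)

lemma vertex_greedy_run_feasible:
  assumes "vertex_greedy_run V E f b k vs"
  shows "feasible_TU V E b k (edges_of E (set vs))"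
proof -
  have "card (set vs) \<le> b \<and> card (edges_of E (set vs)) \<le> k"
  proof (cases "vs = []")
    case True
    then show ?thesis by (simp add: edges_of_def)
  next
    case False
    then show ?thesis
      using vertex_greedy_run_step(2,3)[OF assms, of "length vs - 1"] by simp
  qed
  then show ?thesis using vertex_greedy_run_subset[OF assms] edges_of_subset
    unfolding feasible_TU_def is_vertex_cover_def edges_of_def by blast
qed

lemma vertex_greedy_run_length_ge:
  assumes run: "vertex_greedy_run V E f b k vs" and "finite V" and "V - set vs \<noteq> {}"
  shows "min b (k div max_degree V E) \<le> length vs"
proof (rule ccontr)
  let ?D = "max_degree V E"
  let ?L = "min b (k div ?D)"
  assume "\<not> ?L \<le> length vs"
  obtain v where v: "vg_argmax V E f (set vs) v"
    "b < card (insert v (set vs)) \<or> k < card (edges_of E (insert v (set vs)))"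
    using run[unfolded vertex_greedy_run_def, THEN conjunct2, THEN conjunct2] assms(3) by blast
  have vsV: "insert v (set vs) \<subseteq> V"
    using v(1) vertex_greedy_run_subset[OF run] unfolding vg_argmax_def by simp
  have "card (insert v (set vs)) \<le> Suc (length vs)"
    using card_length[of vs] by (simp add: card_insert_if)
  then have small: "card (insert v (set vs)) \<le> ?L" using \<open>\<not> ?L \<le> length vs\<close> by linarith
  have "card (edges_of E (insert v (set vs))) \<le> card (insert v (set vs)) * ?D"
    by (rule card_edges_of_le[OF assms(2) vsV])
  also have "\<dots> \<le> (k div ?D) * ?D" using small by (intro mult_le_mono1) simp
  also have "\<dots> \<le> k" by (rule div_times_less_eq_dividend)
  finally show False using small v(2) by linarith
qed

lemma vertex_greedy_run_gap:
  assumes run: "vertex_greedy_run V E f b k vs"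
    and mono: "monotone_set_fun E f" and submod: "submodular_set_fun E f" and "normalized f"
    and "finite C" "C \<subseteq> V" "card C \<le> b" "b \<ge> 1" "n \<le> length vs"
  shows "vg_h E f C - vg_h E f (set (take n vs)) \<le> (1 - 1 / real b) ^ n * vg_h E f C"
proof -
  let ?h = "vg_h E f"
  have "?h C - ?h (set (take (Suc i) vs)) \<le> (1 - 1 / real b) * (?h C - ?h (set (take i vs)))"
    if "i < n" for i
  proof -
    have i: "i < length vs" using that assms(9) by simp
    let ?S = "set (take i vs)" and ?v = "vs ! i"
    have am: "vg_argmax V E f ?S ?v" by (rule vertex_greedy_run_step(1)[OF run i])
    have "?S \<subseteq> V" using set_take_subset vertex_greedy_run_subset[OF run] by (rule order_trans)
    moreover have "?v \<in> V" using am unfolding vg_argmax_def by simp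
    ultimately have "?h C - ?h (insert ?v ?S) \<le> (1 - 1 / real b) * (?h C - ?h ?S)"
    proof (rule submodular_greedy_step[OF monotone_set_fun_vg_h[OF mono]
          submodular_set_fun_vg_h[OF mono submod] assms(5-8)])
      fix w assume "w \<in> C - ?S"
      then show "?h (insert w ?S) \<le> ?h (insert ?v ?S)"
        using am assms(6) unfolding vg_argmax_def by blast
    qed
    moreover have "set (take (Suc i) vs) = insert ?v ?S"
      using i by (simp add: take_Suc_conv_app_nth)
    ultimately show ?thesis by simp
  qed
  then have "?h C - ?h (set (take n vs)) \<le> (1 - 1 / real b) ^ n * (?h C - ?h (set (take 0 vs)))"
    using assms(8) by (intro gap_contraction_iterate) auto
  moreover have "?h {} = 0" using assms(4) unfolding vg_h_def edges_of_def normalized_def by simp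
  ultimately show ?thesis by simp
qed

lemma vertex_greedy_run_approx:
  assumes run: "vertex_greedy_run V E f b k vs" and "finite V"
    and "normalized f" "monotone_set_fun E f" "submodular_set_fun E f"
    and "C \<subseteq> V" "card C \<le> b" "b \<ge> 1"
  shows "(1 - exp (- (real (min b (k div max_degree V E)) / real b))) * vg_h E f C
           \<le> vg_h E f (set vs)"
    (is "?\<alpha> * _ \<le> _")
proof (cases "V - set vs = {}")
  case True
  then have "C \<subseteq> set vs" using assms(6) by blast
  then have "vg_h E f C \<le> vg_h E f (set vs)"
    by (rule monotone_set_funD[OF monotone_set_fun_vg_h[OF assms(4), of UNIV]]) simp
  moreover have "?\<alpha> * vg_h E f C \<le> 1 * vg_h E f C"
    using vg_h_nonneg[OF assms(3,4)] by (intro mult_right_mono) auto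
  ultimately show ?thesis by simp
next
  case False
  let ?L = "min b (k div max_degree V E)" and ?h = "vg_h E f"
  have L: "?L \<le> length vs" by (rule vertex_greedy_run_length_ge[OF run assms(2) False])
  have "?h C - ?h (set (take ?L vs)) \<le> (1 - 1 / real b) ^ ?L * ?h C"
    using vertex_greedy_run_gap[OF run assms(4,5,3) _ assms(6-8) L] finite_subset assms(2,6) by blast
  also have "\<dots> \<le> exp (- (real ?L / real b)) * ?h C"
    using one_minus_inverse_power_le_exp[OF assms(8)] vg_h_nonneg[OF assms(3,4)]
    by (rule mult_right_mono)
  finally have "?\<alpha> * ?h C \<le> ?h (set (take ?L vs))" by (simp add: algebra_simps)
  also have "\<dots> \<le> ?h (set vs)"
    by (rule monotone_set_funD[OF monotone_set_fun_vg_h[OF assms(4), of UNIV] set_take_subset]) simp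
  finally show ?thesis .
qed

theorem lemma4:
  fixes V :: "'a set" and E :: "'a set set" and f :: "'a set set \<Rightarrow> real"
    and b k :: nat and vs :: "'a list"
  assumes "simple_graph V E"
    and "b \<ge> 1" and "k \<ge> 1"
    and "normalized f" and "monotone_set_fun E f" and "submodular_set_fun E f"
    and "nonneg_set_fun E f"
    and "max_degree V E \<ge> 1"
    and "vertex_greedy_run V E f b k vs"
  shows "feasible_TU V E b k (edges_of E (set vs)) \<and>
         f (edges_of E (set vs)) \<ge>
           (1 - exp (- min 1 (of_int \<lfloor>real k / real (max_degree V E)\<rfloor> / real b)))
             * OPT1 V E f b k"
proof
  show "feasible_TU V E b k (edges_of E (set vs))"
    by (rule vertex_greedy_run_feasible[OF assms(9)])
  let ?L = "min b (k div max_degree V E)"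
  have ratio: "min 1 (of_int \<lfloor>real k / real (max_degree V E)\<rfloor> / real b) = real ?L / real b"
    using assms(2) by (auto simp: floor_divide_of_nat_eq min_def field_simps)
  have finV: "finite V" using assms(1) by (simp add: simple_graph_def)
  obtain C where C: "C \<subseteq> V" "card C \<le> b" "OPT1 V E f b k \<le> vg_h E f C"
    using OPT1_le_vg_h_cover[OF simple_graph_finite_edges[OF assms(1)] assms(5)] by blast
  have "(1 - exp (- (real ?L / real b))) * OPT1 V E f b k \<le> (1 - exp (- (real ?L / real b))) * vg_h E f C"
    using C(3) assms(2) by (intro mult_left_mono) auto
  also have "\<dots> \<le> vg_h E f (set vs)"
    by (rule vertex_greedy_run_approx[OF assms(9) finV assms(4-6) C(1,2) assms(2)])
  finally show "f (edges_of E (set vs)) \<ge>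
      (1 - exp (- min 1 (of_int \<lfloor>real k / real (max_degree V E)\<rfloor> / real b))) * OPT1 V E f b k"
    unfolding ratio vg_h_def .
qed

end
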